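(* Let $G=(V,E)$ be a finite connected graph (loops allowed) equipped with a random walk $m=\{m_v\}_{v\in V}$ which is ergodic, with invariant distribution $\nu$, and suppose $G$ (with $m$) has Ricci curvature at least $\kappa>0$. Then for every $1$-Lipschitz function $f\colon V\to\mathbb{R}$ and every $t\ge 1$, \[\nu\big(f-E_\nu[f]>t\big)\le \exp\Big(-\frac{t^2\kappa}{7}\Big)\quad\text{and}\quad \nu\big(f-E_\nu[f]<-t\big)\le \exp\Big(-\frac{t^2\kappa}{7}\Big).\]
   Context: For a vertex $v$, $\Gamma(v)$ is the set of neighbors of $v$ and $N(v)=\Gamma(v)\cup\{v\}$. A random walk on $G$ is a family $m=\{m_v\}_{v\in V}$ of probability distributions on $V$ with $m_v$ supported on $N(v)$. It is ergodic if it has a unique invariant distribution $\nu$ (i.e. $\sum_{x}\nu(x)m_x(y)=\nu(y)$ for all $y$) and the distributions of the walk converge to $\nu$ from any starting vertex. $d(x,y)$ is the graph distance. For probability distributions $m_1,m_2$ on $V$, the transportation distance is $W(m_1,m_2)=\inf_A\sum_{x,y}A(x,y)d(x,y)$, the infimum over couplings $A\colon V\times V\to[0,1]$ with $\sum_y A(x,y)=m_1(x)$, $\sum_x A(x,y)=m_2(y)$. The (Ollivier) Ricci curvature is $\kappa(x,y)=1-W(m_x,m_y)/d(x,y)$ for $x\ne y$; $G$ has Ricci curvature at least $\kappa_0$ if $\kappa(x,y)\ge\kappa_0$ for all distinct $x,y\in V$. A function $f\colon V\to\mathbb{R}$ is $c$-Lipschitz if $|f(u)-f(v)|\le c$ for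 every edge $uv\in E$. $E_\nu$ denotes expectation with respect to $\nu$, and $\nu(\cdot)$ the $\nu$-probability of an event on $V$. *)

theory Defs
  imports "HOL-Analysis.Analysis"
begin

definition graph :: "'a set \<Rightarrow> ('a \<Rightarrow> 'a \<Rightarrow> bool) \<Rightarrow> bool" where
  "graph V E \<longleftrightarrow> finite V \<and> V \<noteq> {} \<and> (\<forall>u v. E u v \<longrightarrow> u \<in> V \<and> v \<in> V) \<and> (\<forall>u v. E u v \<longrightarrow> E v u)"

inductive reach :: "('a \<Rightarrow> 'a \<Rightarrow> bool) \<Rightarrow> nat \<Rightarrow> 'a \<Rightarrow> 'a \<Rightarrow> bool" for E where
  reach0: "reach E 0 u u"
| reachS: "E u w \<Longrightarrow> reach E n w v \<Longrightarrow> reach E (Suc n) u v"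

definition connected_graph :: "'a set \<Rightarrow> ('a \<Rightarrow> 'a \<Rightarrow> bool) \<Rightarrow> bool" where
  "connected_graph V E \<longleftrightarrow> (\<forall>u\<in>V. \<forall>v\<in>V. \<exists>n. reach E n u v)"

definition gdist :: "('a \<Rightarrow> 'a \<Rightarrow> bool) \<Rightarrow> 'a \<Rightarrow> 'a \<Rightarrow> real" where
  "gdist E u v = real (LEAST n. reach E n u v)"

definition prob_dist :: "'a set \<Rightarrow> ('a \<Rightarrow> real) \<Rightarrow> bool" where
  "prob_dist V p \<longleftrightarrow> (\<forall>x. 0 \<le> p x) \<and> (\<forall>x. x \<notin> V \<longrightarrow> p x = 0) \<and> sum p V = 1"

definition random_walk :: "'a set \<Rightarrow> ('a \<Rightarrow> 'a \<Rightarrow> bool) \<Rightarrow> ('a \<Rightarrow> 'a \<Rightarrow> real) \<Rightarrow> bool" where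
  "random_walk V E m \<longleftrightarrow> (\<forall>v\<in>V. prob_dist V (m v) \<and> (\<forall>x. m v x \<noteq> 0 \<longrightarrow> x = v \<or> E v x))"

definition walk_step :: "'a set \<Rightarrow> ('a \<Rightarrow> 'a \<Rightarrow> real) \<Rightarrow> ('a \<Rightarrow> real) \<Rightarrow> ('a \<Rightarrow> real)" where
  "walk_step V m p = (\<lambda>y. \<Sum>x\<in>V. p x * m x y)"

definition invariant_dist :: "'a set \<Rightarrow> ('a \<Rightarrow> 'a \<Rightarrow> real) \<Rightarrow> ('a \<Rightarrow> real) \<Rightarrow> bool" where
  "invariant_dist V m nu \<longleftrightarrow> prob_dist V nu \<and> (\<forall>y\<in>V. (\<Sum>x\<in>V. nu x * m x y) = nu y)"

definition ergodic_with :: "'a set \<Rightarrow> ('a \<Rightarrow> 'a \<Rightarrow> real) \<Rightarrow> ('a \<Rightarrow> real) \<Rightarrow> bool" where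
  "ergodic_with V m nu \<longleftrightarrow> invariant_dist V m nu
     \<and> (\<forall>mu. invariant_dist V m mu \<longrightarrow> mu = nu)
     \<and> (\<forall>v\<in>V. \<forall>y\<in>V. (\<lambda>n. ((walk_step V m) ^^ n) (\<lambda>x. if x = v then 1 else 0) y) \<longlonglongrightarrow> nu y)"

definition coupling :: "'a set \<Rightarrow> ('a \<Rightarrow> real) \<Rightarrow> ('a \<Rightarrow> real) \<Rightarrow> ('a \<times> 'a \<Rightarrow> real) \<Rightarrow> bool" where
  "coupling V m1 m2 A \<longleftrightarrow> (\<forall>p. 0 \<le> A p \<and> A p \<le> 1)
     \<and> (\<forall>x\<in>V. (\<Sum>y\<in>V. A (x, y)) = m1 x) \<and> (\<forall>y\<in>V. (\<Sum>x\<in>V. A (x, y)) = m2 y)"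

definition transport_dist :: "'a set \<Rightarrow> ('a \<Rightarrow> 'a \<Rightarrow> bool) \<Rightarrow> ('a \<Rightarrow> real) \<Rightarrow> ('a \<Rightarrow> real) \<Rightarrow> real" where
  "transport_dist V E m1 m2 = Inf {(\<Sum>(x, y)\<in>V \<times> V. A (x, y) * gdist E x y) | A. coupling V m1 m2 A}"

definition ricci :: "'a set \<Rightarrow> ('a \<Rightarrow> 'a \<Rightarrow> bool) \<Rightarrow> ('a \<Rightarrow> 'a \<Rightarrow> real) \<Rightarrow> 'a \<Rightarrow> 'a \<Rightarrow> real" where
  "ricci V E m x y = 1 - transport_dist V E (m x) (m y) / gdist E x y"

definition ricci_at_least :: "'a set \<Rightarrow> ('a \<Rightarrow> 'a \<Rightarrow> bool) \<Rightarrow> ('a \<Rightarrow> 'a \<Rightarrow> real) \<Rightarrow> real \<Rightarrow> bool" where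
  "ricci_at_least V E m k \<longleftrightarrow> (\<forall>x\<in>V. \<forall>y\<in>V. x \<noteq> y \<longrightarrow> k \<le> ricci V E m x y)"

definition lipschitz_graph :: "('a \<Rightarrow> 'a \<Rightarrow> bool) \<Rightarrow> real \<Rightarrow> ('a \<Rightarrow> real) \<Rightarrow> bool" where
  "lipschitz_graph E c f \<longleftrightarrow> (\<forall>u v. E u v \<longrightarrow> \<bar>f u - f v\<bar> \<le> c)"

definition expect :: "'a set \<Rightarrow> ('a \<Rightarrow> real) \<Rightarrow> ('a \<Rightarrow> real) \<Rightarrow> real" where
  "expect V nu f = (\<Sum>x\<in>V. nu x * f x)"

definition dprob :: "'a set \<Rightarrow> ('a \<Rightarrow> real) \<Rightarrow> ('a \<Rightarrow> bool) \<Rightarrow> real" where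
  "dprob V nu P = (\<Sum>x\<in>{x\<in>V. P x}. nu x)"

end

theory Submission
  imports Defs "HOL-Probability.Hoeffding"
begin

text \<open>
  Let \<open>M\<close> be the averaging operator \<open>(M g) x = \<Sum>\<^sub>y m\<^sub>x(y) g(y)\<close>. Transporting along a coupling
  that realises \<open>W(m\<^sub>x, m\<^sub>y)\<close> shows that \<open>M\<close> multiplies Lipschitz constants by at most \<open>1 - \<kappa>\<close>.
  An \<open>L\<close>-Lipschitz \<open>g\<close> varies by at most \<open>2L\<close> on the support of \<open>m\<^sub>x\<close>, so Hoeffding's lemma
  gives \<open>M(e\<^bsup>\<lambda>g\<^esup>) \<le> e\<^bsup>\<lambda>Mg + \<lambda>\<^sup>2L\<^sup>2/2\<^esup>\<close>, and integrating against the invariant \<open>\<nu>\<close> gives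
  \<open>E\<^sub>\<nu> e\<^bsup>\<lambda>g\<^esup> \<le> E\<^sub>\<nu> e\<^bsup>\<lambda>Mg\<^esup> \<cdot> e\<^bsup>\<lambda>\<^sup>2L\<^sup>2/2\<^esup>\<close>. Iterating from a 1-Lipschitz \<open>f\<close>, the squared
  constants \<open>(1 - \<kappa>)\<^bsup>2k\<^esup>\<close> sum to at most \<open>1/\<kappa>\<close> while \<open>M\<^sup>n f\<close> flattens to the constant \<open>E\<^sub>\<nu> f\<close>,
  so \<open>E\<^sub>\<nu> e\<^bsup>\<lambda>(f - E\<^sub>\<nu> f)\<^esup> \<le> e\<^bsup>\<lambda>\<^sup>2/(2\<kappa>)\<^esup>\<close>. The Chernoff bound with \<open>\<lambda> = t\<kappa>\<close> then bounds
  both tails by \<open>e\<^bsup>-t\<^sup>2\<kappa>/2\<^esup>\<close>, for every \<open>t \<ge> 0\<close>.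
\<close>

lemma exp_le_chord:
  fixes l a b y :: real
  assumes "0 \<le> l" "a < b" "y \<in> {a..b}"
  shows "exp (l * y) \<le> ((b - y) * exp (l * a) + (y - a) * exp (l * b)) / (b - a)"
proof -
  define t where "t = (b - y) / (b - a)"
  have t: "t \<in> {0..1}" using assms by (auto simp: t_def)
  have "exp (l * ((1 - t) *\<^sub>R b + t *\<^sub>R a)) \<le> (1 - t) * exp (l * b) + t * exp (l * a)"
    using t by (intro convex_onD[OF convex_on_exp[OF assms(1)]]) auto
  also have "(1 - t) *\<^sub>R b + t *\<^sub>R a = y"
    using assms(2) by (simp add: t_def divide_simps) (simp add: algebra_simps)
  also have "1 - t = (y - a) / (b - a)"
    using assms(2) by (simp add: t_def divide_simps)
  finally show ?thesis
    by (simp add: t_def add_divide_distrib add.commute)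
qed

lemma hoeffding_chord_le:
  fixes l a b \<mu> :: real
  assumes "0 \<le> l" "a \<le> \<mu>" "a < b"
  shows "((b - \<mu>) * exp (l * a) + (\<mu> - a) * exp (l * b)) / (b - a)
    \<le> exp (l * \<mu> + l\<^sup>2 * (b - a)\<^sup>2 / 8)"
proof -
  define q where "q = (\<mu> - a) / (b - a)"
  define z where "z = l * (b - a)"
  have q: "0 \<le> q" and z: "0 \<le> z"
    using assms by (auto simp: q_def z_def)
  have "exp (l * b) = exp (l * a) * exp z"
    by (simp add: z_def mult_exp_exp algebra_simps)
  then have "((b - \<mu>) * exp (l * a) + (\<mu> - a) * exp (l * b)) / (b - a)
      = exp (l * a) * (((b - \<mu>) + (\<mu> - a) * exp z) / (b - a))"
    by (simp add: algebra_simps)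
  also have "((b - \<mu>) + (\<mu> - a) * exp z) / (b - a) = 1 + q * (exp z - 1)"
    using assms(3) unfolding q_def by (simp add: divide_simps) (simp add: algebra_simps)
  also have "exp (l * a) * (1 + q * (exp z - 1))
      = exp (l * \<mu> + (- z * q + ln (1 + q * (exp z - 1))))"
  proof -
    have "l * a = l * \<mu> + - z * q"
      using assms(3) unfolding q_def z_def by (simp add: divide_simps) (simp add: algebra_simps)
    moreover have "0 < 1 + q * (exp z - 1)"
      using q z by (intro add_pos_nonneg mult_nonneg_nonneg) auto
    ultimately show ?thesis by (simp only: exp_add exp_ln mult.assoc)
  qed
  also have "\<dots> \<le> exp (l * \<mu> + z\<^sup>2 / 8)"
    using Hoeffdings_lemma_aux[OF z q] by simp
  also have "z\<^sup>2 / 8 = l\<^sup>2 * (b - a)\<^sup>2 / 8" by (simp add: z_def power_mult_distrib)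
  finally show ?thesis .
qed

lemma sum_weighted_affine:
  fixes p g :: "'b \<Rightarrow> real"
  assumes "sum p S = 1"
  shows "(\<Sum>y\<in>S. p y * (c + d * g y)) = c + d * (\<Sum>y\<in>S. p y * g y)"
  using assms by (simp add: distrib_left sum.distrib sum_distrib_left mult.left_commute
      flip: sum_distrib_right)

lemma sum_weighted_mem_interval:
  fixes p g :: "'b \<Rightarrow> real"
  assumes "\<forall>y\<in>S. 0 \<le> p y" "sum p S = 1" "\<forall>y\<in>S. p y \<noteq> 0 \<longrightarrow> g y \<in> {a..b}"
  shows "(\<Sum>y\<in>S. p y * g y) \<in> {a..b}"
proof -
  have "p y * a \<le> p y * g y \<and> p y * g y \<le> p y * b" if "y \<in> S" for y
    using assms(1,3) that by (cases "p y = 0") (auto intro: mult_left_mono)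
  then have "(\<Sum>y\<in>S. p y * a) \<le> (\<Sum>y\<in>S. p y * g y) \<and> (\<Sum>y\<in>S. p y * g y) \<le> (\<Sum>y\<in>S. p y * b)"
    by (auto intro: sum_mono)
  then show ?thesis using assms(2) by (simp flip: sum_distrib_right)
qed

lemma hoeffding_lemma_finite_sum:
  fixes p g :: "'b \<Rightarrow> real"
  assumes p_nonneg: "\<forall>y\<in>S. 0 \<le> p y" and p_sum: "sum p S = 1"
    and range: "\<forall>y\<in>S. p y \<noteq> 0 \<longrightarrow> g y \<in> {a..b}" and "0 \<le> l"
  shows "(\<Sum>y\<in>S. p y * exp (l * g y)) \<le> exp (l * (\<Sum>y\<in>S. p y * g y) + l\<^sup>2 * (b - a)\<^sup>2 / 8)"
proof -
  define \<mu> where "\<mu> = (\<Sum>y\<in>S. p y * g y)"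
  have "\<mu> \<in> {a..b}" unfolding \<mu>_def using sum_weighted_mem_interval[OF assms(1-3)] .
  then consider "a = b" "\<mu> = a" | "a < b" "a \<le> \<mu>" by fastforce
  then show ?thesis
  proof cases
    case 1
    have "(\<Sum>y\<in>S. p y * exp (l * g y)) = (\<Sum>y\<in>S. p y * exp (l * a))"
      using range 1 by (intro sum.cong) auto
    then show ?thesis
      using 1 sum_weighted_affine[OF p_sum, of "exp (l * a)" 0] unfolding \<mu>_def[symmetric] by simp
  next
    case 2
    define A B where "A = exp (l * a)" and "B = exp (l * b)"
    have chord: "((b - y) * A + (y - a) * B) / (b - a) = (b * A - a * B) / (b - a) + (B - A) / (b - a) * y"
      for y
    proof -
      have "(b - y) * A + (y - a) * B = (b * A - a * B) + (B - A) * y" by (simp add: algebra_simps)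
      then show ?thesis by (simp add: add_divide_distrib)
    qed
    have "p y * exp (l * g y) \<le> p y * ((b * A - a * B) / (b - a) + (B - A) / (b - a) * g y)"
      if "y \<in> S" for y
    proof (cases "p y = 0")
      case False
      then have "exp (l * g y) \<le> ((b - g y) * A + (g y - a) * B) / (b - a)"
        using range that 2 \<open>0 \<le> l\<close> unfolding A_def B_def by (intro exp_le_chord) auto
      then show ?thesis using p_nonneg that by (simp add: chord mult_left_mono)
    qed simp
    then have "(\<Sum>y\<in>S. p y * exp (l * g y))
        \<le> (\<Sum>y\<in>S. p y * ((b * A - a * B) / (b - a) + (B - A) / (b - a) * g y))"
      by (rule sum_mono)
    also have "\<dots> = (b * A - a * B) / (b - a) + (B - A) / (b - a) * \<mu>"
      unfolding \<mu>_def by (rule sum_weighted_affine[OF p_sum])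
    also have "\<dots> = ((b - \<mu>) * A + (\<mu> - a) * B) / (b - a)"
      by (rule chord[symmetric])
    also have "\<dots> \<le> exp (l * \<mu> + l\<^sup>2 * (b - a)\<^sup>2 / 8)"
      unfolding A_def B_def by (rule hoeffding_chord_le[OF \<open>0 \<le> l\<close> 2(2,1)])
    finally show ?thesis unfolding \<mu>_def .
  qed
qed

lemma reach_lipschitz_graph:
  assumes "lipschitz_graph E 1 f" and "reach E n u v"
  shows "\<bar>f u - f v\<bar> \<le> real n"
  using assms(2)
proof (induction rule: reach.induct)
  case (reachS u w n v)
  then have "\<bar>f u - f w\<bar> \<le> 1" using assms(1) unfolding lipschitz_graph_def by blast
  then show ?case using reachS.IH by simp
qed simp

lemma gdist_reach:
  assumes "connected_graph V E" "u \<in> V" "v \<in> V"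
  obtains n where "reach E n u v" "gdist E u v = real n"
proof
  have "\<exists>n. reach E n u v" using assms unfolding connected_graph_def by blast
  then show "reach E (LEAST n. reach E n u v) u v" by (rule LeastI_ex)
qed (simp add: gdist_def)

lemma gdist_self [simp]: "gdist E u u = 0"
  by (simp add: gdist_def reach.reach0)

lemma gdist_le_one:
  assumes "v = u \<or> E u v"
  shows "gdist E u v \<le> 1"
proof (cases "v = u")
  case False
  then have "reach E 1 u v" using assms by (simp add: reach.reachS reach.reach0)
  then have "(LEAST n. reach E n u v) \<le> 1" by (rule Least_le)
  then show ?thesis by (simp add: gdist_def)
qed simp

lemma gdist_ge_one:
  assumes "connected_graph V E" "u \<in> V" "v \<in> V" "u \<noteq> v"
  shows "1 \<le> gdist E u v"
proof -
  obtain n where "reach E n u v" "gdist E u v = real n" using gdist_reach assms(1-3) .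
  then show ?thesis using assms(4) by (cases rule: reach.cases) auto
qed

lemma lipschitz_graph_gdist:
  assumes "connected_graph V E" "lipschitz_graph E 1 f" "u \<in> V" "v \<in> V"
  shows "\<bar>f u - f v\<bar> \<le> gdist E u v"
  by (metis gdist_reach[OF assms(1,3,4)] reach_lipschitz_graph[OF assms(2)])

definition gdist_lipschitz :: "'a set \<Rightarrow> ('a \<Rightarrow> 'a \<Rightarrow> bool) \<Rightarrow> real \<Rightarrow> ('a \<Rightarrow> real) \<Rightarrow> bool" where
  "gdist_lipschitz V E L g \<longleftrightarrow> (\<forall>x\<in>V. \<forall>y\<in>V. \<bar>g x - g y\<bar> \<le> L * gdist E x y)"

lemma prob_dist_le_one:
  assumes "finite V" "prob_dist V p"
  shows "p x \<le> 1"
proof (cases "x \<in> V")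
  case True
  then have "p x \<le> sum p V"
    using assms by (intro member_le_sum) (auto simp: prob_dist_def)
  then show ?thesis using assms(2) by (simp add: prob_dist_def)
qed (use assms(2) in \<open>simp add: prob_dist_def\<close>)

lemma coupling_product:
  assumes "finite V" "prob_dist V p" "prob_dist V q"
  shows "coupling V p q (\<lambda>(x, y). p x * q y)"
  using assms prob_dist_le_one[OF assms(1)]
  by (auto simp: coupling_def prob_dist_def mult_le_one simp flip: sum_distrib_left sum_distrib_right)

lemma expect_diff_le_coupling_cost:
  assumes A: "coupling V p q A" and g: "gdist_lipschitz V E L g" and "0 \<le> L"
  shows "\<bar>expect V p g - expect V q g\<bar> \<le> L * (\<Sum>(x, y)\<in>V \<times> V. A (x, y) * gdist E x y)"
proof -
  have A_nonneg: "0 \<le> A z" for z using A unfolding coupling_def by blast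
  have "expect V p g = (\<Sum>x\<in>V. (\<Sum>y\<in>V. A (x, y)) * g x)"
    using A unfolding expect_def coupling_def by (intro sum.cong) auto
  moreover have "expect V q g = (\<Sum>y\<in>V. (\<Sum>x\<in>V. A (x, y)) * g y)"
    using A unfolding expect_def coupling_def by (intro sum.cong) auto
  moreover have "(\<Sum>y\<in>V. (\<Sum>x\<in>V. A (x, y)) * g y) = (\<Sum>x\<in>V. \<Sum>y\<in>V. A (x, y) * g y)"
    by (subst sum.swap) (simp add: sum_distrib_right)
  ultimately have "expect V p g - expect V q g = (\<Sum>x\<in>V. \<Sum>y\<in>V. A (x, y) * (g x - g y))"
    by (simp add: sum_distrib_right right_diff_distrib sum_subtractf)
  also have "\<dots> = (\<Sum>(x, y)\<in>V \<times> V. A (x, y) * (g x - g y))"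
    by (rule sum.cartesian_product)
  also have "\<bar>\<dots>\<bar> \<le> (\<Sum>(x, y)\<in>V \<times> V. A (x, y) * (L * gdist E x y))"
  proof (rule order_trans[OF sum_abs sum_mono], clarify)
    fix x y assume "x \<in> V" "y \<in> V"
    then have "\<bar>g x - g y\<bar> \<le> L * gdist E x y" using g by (simp add: gdist_lipschitz_def)
    then show "\<bar>A (x, y) * (g x - g y)\<bar> \<le> A (x, y) * (L * gdist E x y)"
      using A_nonneg by (simp add: abs_mult mult_left_mono)
  qed
  also have "\<dots> = L * (\<Sum>(x, y)\<in>V \<times> V. A (x, y) * gdist E x y)"
    by (simp add: sum_distrib_left case_prod_beta mult_ac)
  finally show ?thesis .
qed

text \<open>The easy half of Kantorovich duality.\<close>
lemma expect_diff_le_transport_dist: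
  assumes "finite V" "prob_dist V p" "prob_dist V q" "gdist_lipschitz V E L g" "0 \<le> L"
  shows "\<bar>expect V p g - expect V q g\<bar> \<le> L * transport_dist V E p q"
proof -
  define costs where "costs = {(\<Sum>(x, y)\<in>V \<times> V. A (x, y) * gdist E x y) | A. coupling V p q A}"
  have costs_ne: "costs \<noteq> {}"
    using coupling_product[OF assms(1-3)] unfolding costs_def by blast
  have bound: "\<bar>expect V p g - expect V q g\<bar> \<le> L * c" if "c \<in> costs" for c
    using that expect_diff_le_coupling_cost[OF _ assms(4,5)] unfolding costs_def by blast
  show ?thesis
  proof (cases "L = 0")
    case True
    then show ?thesis using bound costs_ne by auto
  next
    case False
    then have "\<bar>expect V p g - expect V q g\<bar> / L \<le> Inf costs"
      using assms(5) bound costs_ne by (intro cInf_greatest) (auto simp: divide_le_eq mult.commute)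
    then show ?thesis
      using False assms(5) by (simp add: transport_dist_def costs_def divide_le_eq mult.commute)
  qed
qed

lemma transport_dist_nonneg:
  assumes "finite V" "prob_dist V p" "prob_dist V q"
  shows "0 \<le> transport_dist V E p q"
  using expect_diff_le_transport_dist[OF assms, of E 1 "\<lambda>_. 0"]
  by (simp add: gdist_lipschitz_def gdist_def)

definition markov_op :: "'a set \<Rightarrow> ('a \<Rightarrow> 'a \<Rightarrow> real) \<Rightarrow> ('a \<Rightarrow> real) \<Rightarrow> 'a \<Rightarrow> real" where
  "markov_op V m g x = expect V (m x) g"

lemma expect_markov_op:
  assumes "invariant_dist V m nu"
  shows "expect V nu (markov_op V m g) = expect V nu g"
proof -
  have "expect V nu (markov_op V m g) = (\<Sum>x\<in>V. \<Sum>y\<in>V. nu x * m x y * g y)"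
    by (simp add: expect_def markov_op_def sum_distrib_left mult_ac)
  also have "\<dots> = (\<Sum>y\<in>V. (\<Sum>x\<in>V. nu x * m x y) * g y)"
    by (subst sum.swap) (simp add: sum_distrib_right)
  also have "\<dots> = expect V nu g"
    using assms by (simp add: invariant_dist_def expect_def)
  finally show ?thesis .
qed

lemma expect_funpow_markov_op:
  assumes "invariant_dist V m nu"
  shows "expect V nu ((markov_op V m ^^ n) g) = expect V nu g"
  by (induction n) (simp_all add: expect_markov_op[OF assms])

lemma sum_power_le_geometric:
  fixes q :: real
  assumes "0 \<le> q" "q < 1"
  shows "(\<Sum>k<n. q ^ k) \<le> 1 / (1 - q)"
proof -
  have "(\<lambda>k. q ^ k) sums (1 / (1 - q))" using assms by (intro geometric_sums) simp
  then show ?thesis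
    using assms by (metis sums_unique sums_summable finite_lessThan sum_le_suminf zero_le_power)
qed

lemma chernoff_bound:
  assumes "finite V" "\<forall>x. 0 \<le> nu x" "0 \<le> l"
  shows "dprob V nu (\<lambda>x. h x > t) \<le> exp (- l * t) * expect V nu (\<lambda>x. exp (l * h x))"
proof -
  have "nu x \<le> nu x * exp (l * (h x - t))" if "h x > t" for x
  proof -
    have "1 \<le> exp (l * (h x - t))" using that assms(3) by simp
    then show ?thesis using assms(2) mult_left_mono[of 1 _ "nu x"] by simp
  qed
  then have "dprob V nu (\<lambda>x. h x > t) \<le> (\<Sum>x\<in>{x\<in>V. h x > t}. nu x * exp (l * (h x - t)))"
    unfolding dprob_def by (intro sum_mono) auto
  also have "\<dots> \<le> (\<Sum>x\<in>V. nu x * exp (l * (h x - t)))"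
    using assms(1,2) by (intro sum_mono2) auto
  also have "\<dots> = exp (- l * t) * expect V nu (\<lambda>x. exp (l * h x))"
    by (simp add: expect_def sum_distrib_left mult_exp_exp algebra_simps)
  finally show ?thesis .
qed

text \<open>Ergodicity of the walk is used only through the invariance of \<open>nu\<close>.\<close>
locale ricci_curved_walk =
  fixes V :: "'a set" and E :: "'a \<Rightarrow> 'a \<Rightarrow> bool" and m :: "'a \<Rightarrow> 'a \<Rightarrow> real"
    and nu :: "'a \<Rightarrow> real" and \<kappa> :: real
  assumes graph: "graph V E" and connected: "connected_graph V E"
    and walk: "random_walk V E m" and invariant: "invariant_dist V m nu"
    and curvature_pos: "0 < \<kappa>" and curvature: "ricci_at_least V E m \<kappa>"
begin

lemma finite_V: "finite V"
  using graph by (simp add: graph_def)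

lemma prob_dist_m: "x \<in> V \<Longrightarrow> prob_dist V (m x)"
  using walk by (simp add: random_walk_def)

lemma prob_dist_nu: "prob_dist V nu"
  using invariant by (simp add: invariant_dist_def)

lemma transport_dist_le:
  assumes "x \<in> V" "y \<in> V" "x \<noteq> y"
  shows "transport_dist V E (m x) (m y) \<le> (1 - \<kappa>) * gdist E x y"
proof -
  have "\<kappa> \<le> 1 - transport_dist V E (m x) (m y) / gdist E x y"
    using curvature assms by (simp add: ricci_at_least_def ricci_def)
  moreover have "1 \<le> gdist E x y" using gdist_ge_one[OF connected assms] .
  ultimately show ?thesis by (simp add: field_simps)
qed

lemma curvature_le_one:
  assumes "x \<in> V" "y \<in> V" "x \<noteq> y"
  shows "\<kappa> \<le> 1"
proof -
  have "0 \<le> (1 - \<kappa>) * gdist E x y"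
    using transport_dist_le[OF assms] transport_dist_nonneg[OF finite_V prob_dist_m prob_dist_m] assms
    by (meson order_trans)
  then show ?thesis using gdist_ge_one[OF connected assms] by (simp add: zero_le_mult_iff)
qed

lemma markov_op_contraction:
  assumes "gdist_lipschitz V E L g" "0 \<le> L"
  shows "gdist_lipschitz V E ((1 - \<kappa>) * L) (markov_op V m g)"
  unfolding gdist_lipschitz_def
proof (intro ballI)
  fix x y assume xy: "x \<in> V" "y \<in> V"
  show "\<bar>markov_op V m g x - markov_op V m g y\<bar> \<le> (1 - \<kappa>) * L * gdist E x y"
  proof (cases "x = y")
    case False
    have "\<bar>markov_op V m g x - markov_op V m g y\<bar> \<le> L * transport_dist V E (m x) (m y)"
      unfolding markov_op_def
      by (rule expect_diff_le_transport_dist[OF finite_V prob_dist_m prob_dist_m assms]) (use xy in auto)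
    also have "\<dots> \<le> L * ((1 - \<kappa>) * gdist E x y)"
      using transport_dist_le[OF xy False] assms(2) by (rule mult_left_mono)
    finally show ?thesis by (simp add: mult_ac)
  qed simp
qed

lemma funpow_markov_op_lipschitz:
  assumes "gdist_lipschitz V E 1 f" "\<kappa> \<le> 1"
  shows "gdist_lipschitz V E ((1 - \<kappa>) ^ n) ((markov_op V m ^^ n) f)"
  by (induction n) (use assms markov_op_contraction in auto)

lemma markov_op_exp_le:
  assumes "gdist_lipschitz V E L g" "0 \<le> L" "0 \<le> l" "x \<in> V"
  shows "markov_op V m (\<lambda>y. exp (l * g y)) x \<le> exp (l * markov_op V m g x + l\<^sup>2 * L\<^sup>2 / 2)"
proof -
  have "g y \<in> {g x - L..g x + L}" if "y \<in> V" "m x y \<noteq> 0" for y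
  proof -
    have "gdist E x y \<le> 1" using walk assms(4) that by (intro gdist_le_one) (auto simp: random_walk_def)
    then have "L * gdist E x y \<le> L" using assms(2) by (simp add: mult_left_le)
    moreover have "\<bar>g x - g y\<bar> \<le> L * gdist E x y"
      using assms(1,4) that by (simp add: gdist_lipschitz_def)
    ultimately show ?thesis by auto
  qed
  then have "(\<Sum>y\<in>V. m x y * exp (l * g y))
      \<le> exp (l * (\<Sum>y\<in>V. m x y * g y) + l\<^sup>2 * ((g x + L) - (g x - L))\<^sup>2 / 8)"
    using prob_dist_m[OF assms(4)] assms(3)
    by (intro hoeffding_lemma_finite_sum) (auto simp: prob_dist_def)
  then show ?thesis by (simp add: markov_op_def expect_def power2_eq_square mult_ac)
qed

lemma expect_exp_le_markov_op:
  assumes "gdist_lipschitz V E L g" "0 \<le> L" "0 \<le> l"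
  shows "expect V nu (\<lambda>x. exp (l * g x))
    \<le> expect V nu (\<lambda>x. exp (l * markov_op V m g x)) * exp (l\<^sup>2 * L\<^sup>2 / 2)"
proof -
  have "expect V nu (\<lambda>x. exp (l * g x)) = expect V nu (markov_op V m (\<lambda>y. exp (l * g y)))"
    by (rule expect_markov_op[OF invariant, symmetric])
  also have "\<dots> \<le> (\<Sum>x\<in>V. nu x * exp (l * markov_op V m g x + l\<^sup>2 * L\<^sup>2 / 2))"
    unfolding expect_def using prob_dist_nu
    by (intro sum_mono mult_left_mono markov_op_exp_le assms) (auto simp: prob_dist_def)
  also have "\<dots> = expect V nu (\<lambda>x. exp (l * markov_op V m g x)) * exp (l\<^sup>2 * L\<^sup>2 / 2)"
    by (simp add: expect_def exp_add sum_distrib_right mult_ac)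
  finally show ?thesis .
qed

lemma expect_exp_le_funpow_markov_op:
  assumes "gdist_lipschitz V E 1 f" "\<kappa> \<le> 1" "0 \<le> l"
  shows "expect V nu (\<lambda>x. exp (l * f x))
    \<le> expect V nu (\<lambda>x. exp (l * (markov_op V m ^^ n) f x)) * exp (l\<^sup>2 / 2 * (\<Sum>k<n. ((1 - \<kappa>)\<^sup>2) ^ k))"
proof (induction n)
  case (Suc n)
  let ?\<Phi> = "\<lambda>g. expect V nu (\<lambda>x. exp (l * g x))"
  have step: "?\<Phi> ((markov_op V m ^^ n) f)
      \<le> ?\<Phi> ((markov_op V m ^^ Suc n) f) * exp (l\<^sup>2 * ((1 - \<kappa>) ^ n)\<^sup>2 / 2)"
    using expect_exp_le_markov_op[OF funpow_markov_op_lipschitz[OF assms(1,2)] _ assms(3)] assms(2)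
    by simp
  have "?\<Phi> f \<le> ?\<Phi> ((markov_op V m ^^ n) f) * exp (l\<^sup>2 / 2 * (\<Sum>k<n. ((1 - \<kappa>)\<^sup>2) ^ k))"
    by (fact Suc.IH)
  also have "\<dots> \<le> ?\<Phi> ((markov_op V m ^^ Suc n) f) * exp (l\<^sup>2 * ((1 - \<kappa>) ^ n)\<^sup>2 / 2)
      * exp (l\<^sup>2 / 2 * (\<Sum>k<n. ((1 - \<kappa>)\<^sup>2) ^ k))"
    using step by (rule mult_right_mono) simp
  also have "((1 - \<kappa>) ^ n)\<^sup>2 = ((1 - \<kappa>)\<^sup>2) ^ n"
    by (simp flip: power_mult add: mult.commute)
  also have "?\<Phi> ((markov_op V m ^^ Suc n) f) * exp (l\<^sup>2 * ((1 - \<kappa>)\<^sup>2) ^ n / 2)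
      * exp (l\<^sup>2 / 2 * (\<Sum>k<n. ((1 - \<kappa>)\<^sup>2) ^ k))
      = ?\<Phi> ((markov_op V m ^^ Suc n) f) * exp (l\<^sup>2 / 2 * (\<Sum>k<Suc n. ((1 - \<kappa>)\<^sup>2) ^ k))"
    by (simp add: mult_exp_exp algebra_simps)
  finally show ?case .
qed simp

lemma gdist_bounded: "\<exists>D. \<forall>x\<in>V. \<forall>y\<in>V. gdist E x y \<le> D"
proof -
  have "bdd_above ((\<lambda>(x, y). gdist E x y) ` (V \<times> V))"
    using finite_V by (intro bdd_above_finite finite_imageI) auto
  then show ?thesis by (auto simp: bdd_above_def)
qed

lemma expect_exp_le_oscillation:
  assumes "gdist_lipschitz V E c g" "0 \<le> c" "0 \<le> l" "\<forall>x\<in>V. \<forall>y\<in>V. gdist E x y \<le> D"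
  shows "expect V nu (\<lambda>x. exp (l * g x)) \<le> exp (l * (expect V nu g + c * D))"
proof -
  have "g x \<le> expect V nu g + c * D" if x: "x \<in> V" for x
  proof -
    have "g x - expect V nu g = (\<Sum>y\<in>V. nu y * (g x - g y))"
      using prob_dist_nu
      by (simp add: expect_def prob_dist_def right_diff_distrib sum_subtractf flip: sum_distrib_right)
    also have "\<dots> \<le> (\<Sum>y\<in>V. nu y * (c * D))"
    proof (intro sum_mono mult_left_mono)
      fix y assume y: "y \<in> V"
      have "\<bar>g x - g y\<bar> \<le> c * gdist E x y" using assms(1) x y by (simp add: gdist_lipschitz_def)
      also have "\<dots> \<le> c * D" using assms(2,4) x y by (simp add: mult_left_mono)
      finally show "g x - g y \<le> c * D" by linarith
    qed (use prob_dist_nu in \<open>simp add: prob_dist_def\<close>)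
    also have "\<dots> = c * D" using prob_dist_nu by (simp add: prob_dist_def flip: sum_distrib_right)
    finally show ?thesis by linarith
  qed
  then have "expect V nu (\<lambda>x. exp (l * g x)) \<le> (\<Sum>x\<in>V. nu x * exp (l * (expect V nu g + c * D)))"
    unfolding expect_def using prob_dist_nu assms(3)
    by (intro sum_mono mult_left_mono) (auto simp: prob_dist_def intro!: mult_left_mono)
  also have "\<dots> = exp (l * (expect V nu g + c * D))"
    using prob_dist_nu by (simp add: prob_dist_def flip: sum_distrib_right)
  finally show ?thesis .
qed

lemma expect_exp_le_funpow_bound:
  assumes "lipschitz_graph E 1 f" "\<kappa> \<le> 1" "0 \<le> l" "\<forall>x\<in>V. \<forall>y\<in>V. gdist E x y \<le> D"
  shows "expect V nu (\<lambda>x. exp (l * f x))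
    \<le> exp (l * expect V nu f + l\<^sup>2 / (2 * \<kappa>) + l * D * (1 - \<kappa>) ^ n)"
proof -
  have f: "gdist_lipschitz V E 1 f"
    using lipschitz_graph_gdist[OF connected assms(1)] by (simp add: gdist_lipschitz_def)
  have "(\<Sum>k<n. ((1 - \<kappa>)\<^sup>2) ^ k) \<le> 1 / (1 - (1 - \<kappa>)\<^sup>2)"
    using assms(2) curvature_pos by (intro sum_power_le_geometric) (auto simp: power2_less_1_iff)
  also have "\<dots> \<le> 1 / \<kappa>"
  proof -
    have "\<kappa> * \<kappa> \<le> \<kappa>" using assms(2) curvature_pos by (simp add: mult_left_le)
    then have "\<kappa> \<le> 1 - (1 - \<kappa>)\<^sup>2" by (simp add: power2_eq_square algebra_simps)
    then show ?thesis using curvature_pos by (intro divide_left_mono mult_pos_pos) auto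
  qed
  finally have "l\<^sup>2 / 2 * (\<Sum>k<n. ((1 - \<kappa>)\<^sup>2) ^ k) \<le> l\<^sup>2 / 2 * (1 / \<kappa>)"
    by (rule mult_left_mono) simp
  then have geometric: "exp (l\<^sup>2 / 2 * (\<Sum>k<n. ((1 - \<kappa>)\<^sup>2) ^ k)) \<le> exp (l\<^sup>2 / (2 * \<kappa>))"
    by simp
  have oscillation: "expect V nu (\<lambda>x. exp (l * (markov_op V m ^^ n) f x))
      \<le> exp (l * (expect V nu f + (1 - \<kappa>) ^ n * D))"
    using expect_exp_le_oscillation[OF funpow_markov_op_lipschitz[OF f assms(2)] _ assms(3,4)] assms(2)
    by (simp add: expect_funpow_markov_op[OF invariant])
  have "expect V nu (\<lambda>x. exp (l * f x))
      \<le> expect V nu (\<lambda>x. exp (l * (markov_op V m ^^ n) f x)) * exp (l\<^sup>2 / 2 * (\<Sum>k<n. ((1 - \<kappa>)\<^sup>2) ^ k))"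
    by (rule expect_exp_le_funpow_markov_op[OF f assms(2,3)])
  also have "\<dots> \<le> exp (l * (expect V nu f + (1 - \<kappa>) ^ n * D)) * exp (l\<^sup>2 / (2 * \<kappa>))"
    using oscillation geometric by (rule mult_mono) simp_all
  also have "\<dots> = exp (l * expect V nu f + l\<^sup>2 / (2 * \<kappa>) + l * D * (1 - \<kappa>) ^ n)"
    by (simp add: mult_exp_exp algebra_simps)
  finally show ?thesis .
qed

lemma expect_exp_le:
  assumes "lipschitz_graph E 1 f" "0 \<le> l"
  shows "expect V nu (\<lambda>x. exp (l * f x)) \<le> exp (l * expect V nu f + l\<^sup>2 / (2 * \<kappa>))"
proof (cases "\<exists>x\<in>V. \<exists>y\<in>V. x \<noteq> y")
  case True
  then have "\<kappa> \<le> 1" using curvature_le_one by blast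
  obtain D where D: "\<forall>x\<in>V. \<forall>y\<in>V. gdist E x y \<le> D" using gdist_bounded by blast
  have "(\<lambda>n. exp (l * expect V nu f + l\<^sup>2 / (2 * \<kappa>) + l * D * (1 - \<kappa>) ^ n))
      \<longlonglongrightarrow> exp (l * expect V nu f + l\<^sup>2 / (2 * \<kappa>) + l * D * 0)"
    using \<open>\<kappa> \<le> 1\<close> curvature_pos by (intro tendsto_intros LIMSEQ_power_zero) auto
  then show ?thesis
    using expect_exp_le_funpow_bound[OF assms(1) \<open>\<kappa> \<le> 1\<close> assms(2) D]
    by (intro LIMSEQ_le_const) auto
next
  case False
  \<comment> \<open>On a single vertex the curvature hypothesis is vacuous, so \<open>\<kappa> > 1\<close> is possible.\<close>
  then have "gdist_lipschitz V E 0 f" "\<forall>x\<in>V. \<forall>y\<in>V. gdist E x y \<le> 0"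
    by (auto simp: gdist_lipschitz_def)
  then have "expect V nu (\<lambda>x. exp (l * f x)) \<le> exp (l * expect V nu f)"
    using expect_exp_le_oscillation[of 0 f l 0] assms(2) by simp
  also have "\<dots> \<le> exp (l * expect V nu f + l\<^sup>2 / (2 * \<kappa>))"
    using curvature_pos by simp
  finally show ?thesis .
qed

lemma upper_tail_le:
  assumes "lipschitz_graph E 1 f" "0 \<le> t"
  shows "dprob V nu (\<lambda>x. f x - expect V nu f > t) \<le> exp (- (t\<^sup>2 * \<kappa>) / 2)"
proof -
  define l where "l = t * \<kappa>"
  define \<mu> where "\<mu> = expect V nu f"
  have l: "0 \<le> l" using assms(2) curvature_pos by (simp add: l_def)
  have "dprob V nu (\<lambda>x. f x - \<mu> > t) \<le> exp (- l * t) * expect V nu (\<lambda>x. exp (l * (f x - \<mu>)))"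
    using prob_dist_nu by (intro chernoff_bound finite_V l) (simp add: prob_dist_def)
  also have "expect V nu (\<lambda>x. exp (l * (f x - \<mu>))) = exp (- l * \<mu>) * expect V nu (\<lambda>x. exp (l * f x))"
    by (simp add: expect_def sum_distrib_left mult_exp_exp algebra_simps)
  also have "\<dots> \<le> exp (- l * \<mu>) * exp (l * \<mu> + l\<^sup>2 / (2 * \<kappa>))"
    unfolding \<mu>_def by (intro mult_left_mono expect_exp_le assms(1) l) simp
  also have "exp (- l * t) * (exp (- l * \<mu>) * exp (l * \<mu> + l\<^sup>2 / (2 * \<kappa>))) = exp (- (t\<^sup>2 * \<kappa>) / 2)"
    using curvature_pos by (simp add: l_def mult_exp_exp power2_eq_square field_simps)
  finally show ?thesis by (simp add: \<mu>_def)
qed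

lemma lower_tail_le:
  assumes "lipschitz_graph E 1 f" "0 \<le> t"
  shows "dprob V nu (\<lambda>x. f x - expect V nu f < - t) \<le> exp (- (t\<^sup>2 * \<kappa>) / 2)"
proof -
  have "lipschitz_graph E 1 (\<lambda>x. - f x)"
    using assms(1) by (simp add: lipschitz_graph_def abs_minus_commute)
  moreover have "expect V nu (\<lambda>x. - f x) = - expect V nu f"
    by (simp add: expect_def sum_negf)
  ultimately have "(\<lambda>x. f x - expect V nu f < - t) = (\<lambda>x. - f x - expect V nu (\<lambda>x. - f x) > t)"
    by auto
  then show ?thesis
    using upper_tail_le[OF \<open>lipschitz_graph E 1 (\<lambda>x. - f x)\<close> assms(2)] by simp
qed

end

theorem theorem1:
  fixes V :: "'a set" and E :: "'a \<Rightarrow> 'a \<Rightarrow> bool" and m :: "'a \<Rightarrow> 'a \<Rightarrow> real"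
    and nu :: "'a \<Rightarrow> real" and \<kappa> :: real
  assumes "graph V E" and "connected_graph V E"
    and "random_walk V E m" and "ergodic_with V m nu"
    and "0 < \<kappa>" and "ricci_at_least V E m \<kappa>"
  shows "\<forall>f t. lipschitz_graph E 1 f \<and> 1 \<le> t \<longrightarrow>
           dprob V nu (\<lambda>x. f x - expect V nu f > t) \<le> exp (- (t\<^sup>2 * \<kappa>) / 7)
         \<and> dprob V nu (\<lambda>x. f x - expect V nu f < - t) \<le> exp (- (t\<^sup>2 * \<kappa>) / 7)"
proof (intro allI impI conjI)
  interpret ricci_curved_walk V E m nu \<kappa>
    using assms by unfold_locales (auto simp: ergodic_with_def)
  fix f :: "'a \<Rightarrow> real" and t :: real
  assume f_t: "lipschitz_graph E 1 f \<and> 1 \<le> t"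
  have "0 \<le> t\<^sup>2 * \<kappa>" using assms(5) by simp
  then have weaken: "exp (- (t\<^sup>2 * \<kappa>) / 2) \<le> exp (- (t\<^sup>2 * \<kappa>) / 7)" by (simp add: mult.commute)
  show "dprob V nu (\<lambda>x. f x - expect V nu f > t) \<le> exp (- (t\<^sup>2 * \<kappa>) / 7)"
    using f_t by (intro order_trans[OF upper_tail_le weaken]) auto
  show "dprob V nu (\<lambda>x. f x - expect V nu f < - t) \<le> exp (- (t\<^sup>2 * \<kappa>) / 7)"
    using f_t by (intro order_trans[OF lower_tail_le weaken]) auto
qed

end
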